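(* Let $T:[a,b]\times[c,d]\to\mathbb{R}$ be the function constructed from a generating function $\phi$ as described in the context. If there is $y_0\in[c,d]$ such that $x\mapsto\phi(x,y_0)$ is non-constant on $[a_0,a_1]$, then $T$ is not of bounded variation in the sense of Arzelà on $[a,b]\times[c,d]$.
   Context: Let $a<b$, $c<d$. Set $a_0=a$ and $a_n=a+(b-a)(\tfrac12+\tfrac14+\dots+\tfrac1{2^n})$ for $n\in\mathbb{N}$, so $a_n\uparrow b$. Let $\phi:[a_0,a_1]\times[c,d]\to\mathbb{R}$ be continuous with $\phi(a_0,y)=\phi(a_1,y)$ for all $y\in[c,d]$ (the generating function). For $n\ge1$ let $\psi_n:[a_{n-1},a_n]\to[a_0,a_1]$ be the increasing affine bijection $\psi_n(x)=\frac{2^n[(a_1-a_0)x+a_0a_n-a_1a_{n-1}]}{b-a}$. Let $F_1=\phi$ on $[a_0,a_1]\times[c,d]$ and for $n\ge2$, $F_n(x,y)=\frac1n\phi(\psi_n(x),y)+\frac{n-1}{n}\phi(a_0,y)$ for $(x,y)\in[a_{n-1},a_n]\times[c,d]$. Define $T_n(x,y)=F_k(x,y)$ for $(x,y)\in[a_{k-1},a_k]\times[c,d]$, $k=1,\dots,n$, and $T_n(x,y)=F_n(a_n,y)$ for $(x,y)\in[a_n,b]\times[c,d]$; and $T(x,y)=\lim_{n\to\infty}T_n(x,y)$. A function $f:[a,b]\times[c,d]\to\mathbb{R}$ is of bounded variation in the sense of Arzelà if there is $K$ such that for all $m$ and all $a=x_0\le\dots\le x_m=b$, $c=y_0\le\dots\le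 y_m=d$, $\sum_{i=0}^{m-1}|f(x_{i+1},y_{i+1})-f(x_i,y_i)|\le K$. *)

theory Defs
  imports "HOL-Analysis.Analysis"
begin

definition apt :: "real \<Rightarrow> real \<Rightarrow> nat \<Rightarrow> real" where
  "apt a b n = a + (b - a) * (\<Sum>i\<in>{1..n}. 1 / 2 ^ i)"

text \<open>psi_n : [a_{n-1}, a_n] -> [a_0, a_1], the increasing affine bijection.\<close>
definition psi :: "real \<Rightarrow> real \<Rightarrow> nat \<Rightarrow> real \<Rightarrow> real" where
  "psi a b n x = 2 ^ n * ((apt a b 1 - apt a b 0) * x + apt a b 0 * apt a b n
                           - apt a b 1 * apt a b (n - 1)) / (b - a)"

definition Fgen :: "real \<Rightarrow> real \<Rightarrow> (real \<Rightarrow> real \<Rightarrow> real) \<Rightarrow> nat \<Rightarrow> real \<Rightarrow> real \<Rightarrow> real" where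
  "Fgen a b \<phi> n x y = (if n = 1 then \<phi> x y
     else (1 / real n) * \<phi> (psi a b n x) y + (real n - 1) / real n * \<phi> (apt a b 0) y)"

text \<open>T_n (n >= 1): equal to F_k on [a_{k-1}, a_k] for k = 1..n (we take the least such k;
  adjacent pieces agree at common endpoints), and F_n(a_n, y) on [a_n, b].\<close>
definition Tn :: "real \<Rightarrow> real \<Rightarrow> (real \<Rightarrow> real \<Rightarrow> real) \<Rightarrow> nat \<Rightarrow> real \<Rightarrow> real \<Rightarrow> real" where
  "Tn a b \<phi> n x y = (if x \<le> apt a b n
      then Fgen a b \<phi> (LEAST k. 1 \<le> k \<and> x \<le> apt a b k) x y
      else Fgen a b \<phi> n (apt a b n) y)"

definition Tlim :: "real \<Rightarrow> real \<Rightarrow> (real \<Rightarrow> real \<Rightarrow> real) \<Rightarrow> real \<Rightarrow> real \<Rightarrow> real" where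
  "Tlim a b \<phi> x y = lim (\<lambda>n. Tn a b \<phi> (Suc n) x y)"

definition arzela_bv :: "(real \<Rightarrow> real \<Rightarrow> real) \<Rightarrow> real \<Rightarrow> real \<Rightarrow> real \<Rightarrow> real \<Rightarrow> bool" where
  "arzela_bv f a b c d \<longleftrightarrow> (\<exists>K. \<forall>(m::nat) (xs::nat \<Rightarrow> real) (ys::nat \<Rightarrow> real).
      xs 0 = a \<and> xs m = b \<and> ys 0 = c \<and> ys m = d \<and>
      (\<forall>i<m. xs i \<le> xs (Suc i) \<and> ys i \<le> ys (Suc i)) \<longrightarrow>
      (\<Sum>i<m. \<bar>f (xs (Suc i)) (ys (Suc i)) - f (xs i) (ys i)\<bar>) \<le> K)"

end

theory Submission
  imports Defs "HOL-Analysis.Harmonic_Numbers"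
begin

text \<open>On the k-th piece (a_(k-1), a_k] the section T(., y) is phi(., y) rescaled affinely onto
  [a_0, a_1] and damped by the factor 1/k towards phi(a, y). If phi(p, y) differs from phi(a, y),
  then T(., y) takes the value phi(a, y) at every a_k (by periodicity of phi), and the value
  phi(a, y) + (phi(p, y) - phi(a, y))/(k + 1) at the copy of p in the next piece. Running through
  these points in increasing order gives monotone chains whose variation dominates a tail of the
  harmonic series, so no section of T, and hence not T itself, is of bounded variation.\<close>

lemma apt_eq: "apt a b n = b - (b - a) / 2 ^ n"
proof (induction n)
  case 0
  then show ?case by (simp add: apt_def)
next
  case (Suc n)
  have "apt a b (Suc n) = apt a b n + (b - a) / 2 ^ Suc n"
    by (simp add: apt_def algebra_simps)
  with Suc show ?case by (simp add: field_simps)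
qed

lemma apt_mono: "a < b \<Longrightarrow> m \<le> n \<Longrightarrow> apt a b m \<le> apt a b n"
  unfolding apt_eq by (simp add: frac_le)

lemma psi_Suc: "a < b \<Longrightarrow> psi a b (Suc j) x = b + 2 ^ j * (x - b)"
  unfolding psi_def apt_eq by (simp add: field_simps)

lemma Least_apt_eq:
  assumes "a < b" "1 \<le> k" "apt a b (k - 1) < x" "x \<le> apt a b k"
  shows "(LEAST k'. 1 \<le> k' \<and> x \<le> apt a b k') = k"
proof (rule Least_equality)
  show "1 \<le> k \<and> x \<le> apt a b k" using assms by simp
next
  fix k' assume k': "1 \<le> k' \<and> x \<le> apt a b k'"
  show "k \<le> k'"
  proof (rule ccontr)
    assume "\<not> k \<le> k'"
    then have "apt a b k' \<le> apt a b (k - 1)" using apt_mono assms(1) by simp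
    with k' assms(3) show False by simp
  qed
qed

lemma Tlim_eq_Fgen:
  assumes "a < b" "1 \<le> k" "apt a b (k - 1) < x" "x \<le> apt a b k"
  shows "Tlim a b \<phi> x y = Fgen a b \<phi> k x y"
proof -
  have "Tn a b \<phi> (Suc n) x y = Fgen a b \<phi> k x y" if "k \<le> n" for n
  proof -
    have "x \<le> apt a b (Suc n)" using apt_mono[OF assms(1), of k "Suc n"] that assms(4) by simp
    then show ?thesis unfolding Tn_def using Least_apt_eq[OF assms] by simp
  qed
  then have "(\<lambda>n. Tn a b \<phi> (Suc n) x y) \<longlonglongrightarrow> Fgen a b \<phi> k x y"
    by (intro tendsto_eventually) (auto simp: eventually_sequentially)
  then show ?thesis unfolding Tlim_def by (rule limI)
qed

text \<open>The inverse of psi (Suc j): it maps [a_0, a_1] onto [a_j, a_(j+1)].\<close>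
definition contract :: "real \<Rightarrow> nat \<Rightarrow> real \<Rightarrow> real" where
  "contract b j x = b - (b - x) / 2 ^ j"

lemma contract_mono: "x \<le> x' \<Longrightarrow> contract b j x \<le> contract b j x'"
  by (simp add: contract_def divide_right_mono)

lemma contract_Suc_eq: "contract b (Suc j) a = contract b j ((a + b) / 2)"
  by (simp add: contract_def field_simps)

lemma contract_mem: "x \<in> {a..b} \<Longrightarrow> contract b j x \<in> {a..b}"
proof -
  assume x: "x \<in> {a..b}"
  then have "(b - x) / 2 ^ j \<le> (b - x) / 1"
    by (intro divide_left_mono) auto
  with x show ?thesis
    by (auto simp: contract_def)
qed

lemma Tlim_contract:
  assumes "a < b" "a < x" "x \<le> (a + b) / 2"
  shows "Tlim a b \<phi> (contract b j x) y = \<phi> a y + (\<phi> x y - \<phi> a y) / (j + 1)"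
proof -
  let ?t = "contract b j x"
  have "apt a b j < ?t"
    using assms by (simp add: apt_eq contract_def field_simps)
  moreover have "?t \<le> apt a b (Suc j)"
  proof -
    have "2 * x * 2 ^ j \<le> (a + b) * 2 ^ j"
      using assms(3) by (intro mult_right_mono) auto
    then show ?thesis by (simp add: apt_eq contract_def field_simps)
  qed
  ultimately have "Tlim a b \<phi> ?t y = Fgen a b \<phi> (Suc j) ?t y"
    using Tlim_eq_Fgen[OF assms(1), of "Suc j"] by simp
  also have "\<dots> = \<phi> a y + (\<phi> x y - \<phi> a y) / (j + 1)"
  proof -
    have "psi a b (Suc j) ?t = x"
      using assms(1) by (simp add: psi_Suc contract_def)
    moreover have "apt a b 0 = a"
      by (simp add: apt_def)
    moreover have "(1 + real j) \<noteq> 0"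
      by linarith
    ultimately show ?thesis
      by (simp add: Fgen_def contract_def add.commute divide_simps) (simp add: algebra_simps)
  qed
  finally show ?thesis .
qed

lemma Tlim_contract_Suc_left_end:
  assumes "a < b" "\<phi> ((a + b) / 2) y = \<phi> a y"
  shows "Tlim a b \<phi> (contract b (Suc j) a) y = \<phi> a y"
  unfolding contract_Suc_eq using Tlim_contract[OF assms(1), where x = "(a + b) / 2"] assms by simp

lemma arzela_bv_section_variation_bounded:
  assumes "arzela_bv f a b c d" "y \<in> {c..d}"
  obtains K where "\<And>n xs. (\<forall>i\<le>n. xs i \<in> {a..b}) \<Longrightarrow> (\<forall>i<n. xs i \<le> xs (Suc i)) \<Longrightarrow>
    (\<Sum>i<n. \<bar>f (xs (Suc i)) y - f (xs i) y\<bar>) \<le> K"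
proof -
  obtain K where K: "\<And>m xs ys. xs 0 = a \<Longrightarrow> xs m = b \<Longrightarrow> ys 0 = c \<Longrightarrow> ys m = d \<Longrightarrow>
      (\<forall>i<m. xs i \<le> xs (Suc i) \<and> ys i \<le> ys (Suc i)) \<Longrightarrow>
      (\<Sum>i<m. \<bar>f (xs (Suc i)) (ys (Suc i)) - f (xs i) (ys i)\<bar>) \<le> K"
    using assms(1) unfolding arzela_bv_def by blast
  have "(\<Sum>i<n. \<bar>f (xs (Suc i)) y - f (xs i) y\<bar>) \<le> K"
    if range: "\<forall>i\<le>n. xs i \<in> {a..b}" and mono: "\<forall>i<n. xs i \<le> xs (Suc i)" for n xs
  proof -
    \<comment> \<open>Pad the chain with the corners (a, c) and (b, d).\<close>
    define xs' where "xs' i = (if i = 0 then a else if i \<le> Suc n then xs (i - 1) else b)" for i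
    define ys' where "ys' i = (if i = 0 then c else if i \<le> Suc n then y else d)" for i
    define g where "g i = \<bar>f (xs' (Suc i)) (ys' (Suc i)) - f (xs' i) (ys' i)\<bar>" for i
    have "(\<Sum>i<n. \<bar>f (xs (Suc i)) y - f (xs i) y\<bar>) = (\<Sum>i<n. g (Suc i))"
      by (intro sum.cong) (auto simp: g_def xs'_def ys'_def)
    also have "\<dots> \<le> g 0 + (\<Sum>i<n. g (Suc i)) + g (Suc n)"
      by (simp add: g_def)
    also have "\<dots> = (\<Sum>i<Suc (Suc n). g i)"
      unfolding sum.lessThan_Suc_shift[of g "Suc n"] sum.lessThan_Suc[of "\<lambda>i. g (Suc i)" n]
      by simp
    also have "\<dots> \<le> K"
      unfolding g_def
    proof (rule K)
      show "\<forall>i<Suc (Suc n). xs' i \<le> xs' (Suc i) \<and> ys' i \<le> ys' (Suc i)"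
        using range mono assms(2) by (auto simp: xs'_def ys'_def not_less_eq_eq gr0_conv_Suc)
    qed (simp_all add: xs'_def ys'_def)
    finally show ?thesis .
  qed
  with that show thesis by blast
qed

lemma sum_inverse_Suc_Suc_eq_harm: "(\<Sum>k<n. 1 / (real k + 2)) = harm (Suc n) - 1"
  unfolding harm_altdef sum.lessThan_Suc_shift by (simp add: inverse_eq_divide add.commute)

lemma harm_scaled_unbounded:
  assumes "\<delta> > 0"
  obtains N where "K < \<delta> * (harm (Suc N) - 1 :: real)"
proof -
  have "\<forall>\<^sub>F n in sequentially. K / \<delta> + 2 \<le> (harm n :: real)"
    using harm_at_top by (simp add: filterlim_at_top)
  then obtain N where "\<forall>n\<ge>N. K / \<delta> + 2 \<le> (harm n :: real)"
    unfolding eventually_sequentially by blast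
  then have "K + 2 * \<delta> \<le> \<delta> * harm (Suc N)"
    using assms by (simp add: field_simps)
  with assms show thesis
    by (intro that[of N]) (simp add: algebra_simps)
qed

lemma sum_even_indices_le:
  fixes g :: "nat \<Rightarrow> 'a::ordered_comm_monoid_add"
  assumes "\<And>i. 0 \<le> g i"
  shows "(\<Sum>j<n. g (2 * j)) \<le> (\<Sum>i<2 * n. g i)"
proof -
  have "(\<Sum>j<n. g (2 * j)) = sum g ((\<lambda>j. 2 * j) ` {..<n})"
    by (simp add: sum.reindex inj_on_def)
  also have "\<dots> \<le> sum g {..<2 * n}"
    by (rule sum_mono2) (auto simp: assms)
  finally show ?thesis .
qed

lemma Tlim_section_variation_unbounded:
  assumes "a < b" "a < p" "p \<le> (a + b) / 2"
    and "\<phi> ((a + b) / 2) y = \<phi> a y" "\<phi> p y \<noteq> \<phi> a y"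
  obtains n xs where "\<forall>i\<le>n. xs i \<in> {a..b}" "\<forall>i<n. xs i \<le> xs (Suc i)"
    "K < (\<Sum>i<n. \<bar>Tlim a b \<phi> (xs (Suc i)) y - Tlim a b \<phi> (xs i) y\<bar>)"
proof -
  define \<delta> where "\<delta> = \<bar>\<phi> p y - \<phi> a y\<bar>"
  have "\<delta> > 0"
    using assms(5) by (simp add: \<delta>_def)
  have T_p: "Tlim a b \<phi> (contract b (Suc j) p) y = \<phi> a y + (\<phi> p y - \<phi> a y) / (real j + 2)"
    for j
    using Tlim_contract[OF assms(1-3), where j = "Suc j"] by (simp add: add.commute)
  obtain N where N: "K < \<delta> * (harm (Suc N) - 1)"
    using harm_scaled_unbounded[OF \<open>\<delta> > 0\<close>] by blast
  define xs where "xs i = contract b (Suc (i div 2)) (if even i then a else p)" for i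
  define g where "g i = \<bar>Tlim a b \<phi> (xs (Suc i)) y - Tlim a b \<phi> (xs i) y\<bar>" for i
  show thesis
  proof (rule that)
    have "a \<in> {a..b}" "p \<in> {a..b}"
      using assms(1-3) by auto
    then show "\<forall>i\<le>2 * N. xs i \<in> {a..b}"
      by (simp add: xs_def contract_mem del: atLeastAtMost_iff)
    show "\<forall>i<2 * N. xs i \<le> xs (Suc i)"
    proof (intro allI impI)
      fix i
      show "xs i \<le> xs (Suc i)"
      proof (cases "even i")
        case True
        then show ?thesis using assms(2) by (auto simp: xs_def intro: contract_mono)
      next
        case False
        then have "xs (Suc i) = contract b (Suc (i div 2)) ((a + b) / 2)"
          by (simp add: xs_def contract_Suc_eq odd_Suc_div_two)
        with False show ?thesis using assms(3) by (simp add: xs_def contract_mono)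
      qed
    qed
    have "K < \<delta> * (harm (Suc N) - 1)"
      by (rule N)
    also have "\<dots> = (\<Sum>j<N. \<delta> / (real j + 2))"
      by (simp add: sum_distrib_left flip: sum_inverse_Suc_Suc_eq_harm)
    also have "\<dots> = (\<Sum>j<N. g (2 * j))"
      using Tlim_contract_Suc_left_end[where \<phi> = \<phi> and y = y, OF assms(1,4)]
      by (simp add: g_def xs_def T_p \<delta>_def abs_divide)
    also have "\<dots> \<le> sum g {..<2 * N}"
      by (rule sum_even_indices_le) (simp add: g_def)
    finally show "K < (\<Sum>i<2 * N. \<bar>Tlim a b \<phi> (xs (Suc i)) y - Tlim a b \<phi> (xs i) y\<bar>)"
      by (simp add: g_def)
  qed
qed

theorem mainTheorem9:
  fixes a b c d :: real and \<phi> :: "real \<Rightarrow> real \<Rightarrow> real"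
  assumes "a < b" and "c < d"
    and "continuous_on ({apt a b 0..apt a b 1} \<times> {c..d}) (\<lambda>(x, y). \<phi> x y)"
    and "\<And>y. y \<in> {c..d} \<Longrightarrow> \<phi> (apt a b 0) y = \<phi> (apt a b 1) y"
    and "\<exists>y0\<in>{c..d}. \<exists>x1\<in>{apt a b 0..apt a b 1}. \<exists>x2\<in>{apt a b 0..apt a b 1}.
           \<phi> x1 y0 \<noteq> \<phi> x2 y0"
  shows "\<not> arzela_bv (Tlim a b \<phi>) a b c d"
proof
  assume bv: "arzela_bv (Tlim a b \<phi>) a b c d"
  have a0: "apt a b 0 = a" and a1: "apt a b 1 = (a + b) / 2"
    by (simp_all add: apt_eq field_simps)
  obtain y x1 x2 where y: "y \<in> {c..d}" and "x1 \<in> {a..(a + b) / 2}" "x2 \<in> {a..(a + b) / 2}"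
    and "\<phi> x1 y \<noteq> \<phi> x2 y"
    using assms(5) unfolding a0 a1 by blast
  then obtain p where p: "p \<in> {a..(a + b) / 2}" "\<phi> p y \<noteq> \<phi> a y"
    by metis
  then have p_bounds: "a < p" "p \<le> (a + b) / 2"
    by (cases "p = a", auto)+
  have periodic: "\<phi> ((a + b) / 2) y = \<phi> a y"
    using assms(4)[OF y] unfolding a0 a1 by simp
  obtain K where K: "\<And>n xs. (\<forall>i\<le>n. xs i \<in> {a..b}) \<Longrightarrow> (\<forall>i<n. xs i \<le> xs (Suc i)) \<Longrightarrow>
      (\<Sum>i<n. \<bar>Tlim a b \<phi> (xs (Suc i)) y - Tlim a b \<phi> (xs i) y\<bar>) \<le> K"
    using arzela_bv_section_variation_bounded[OF bv y] by blast
  obtain n xs where "\<forall>i\<le>n. xs i \<in> {a..b}" "\<forall>i<n. xs i \<le> xs (Suc i)"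
    "K < (\<Sum>i<n. \<bar>Tlim a b \<phi> (xs (Suc i)) y - Tlim a b \<phi> (xs i) y\<bar>)"
    using Tlim_section_variation_unbounded[where \<phi> = \<phi> and y = y and K = K, OF assms(1) p_bounds]
      periodic p(2) by blast
  with K show False
    by (meson not_le)
qed

end
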